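(* Consider the closed multi-class BCMP network model $\mathcal{Z}$ of an autonomous mobility-on-demand (AMoD) system described in the context, and suppose that the routing policies $\{\alpha^{(k)}\}_{k\in\mathcal{K}}$ and rebalancing rates $\{\lambda^{(r)}\}_{r\in\mathcal{R}}$ form a feasible solution to the OSCARR problem. Then the total relative throughputs at the stations satisfy \[ \pi_i=\sum_{k\in\mathcal{D}_i}\widetilde{p}^{(k)}_{s^{(k)}}\,\pi_{s^{(k)}}\qquad\text{for all } i\in\mathcal{S}. \]
   Context: AMoD network model. There is a finite set $\mathcal{V}$ of road intersections (vertices), a finite set $\mathcal{S}$ of stations and a finite set $\mathcal{I}$ of road links. The set of queues is $\mathcal{N}=\mathcal{S}\cup\mathcal{I}$. Each queue $i$ is a directed edge with origin vertex $\mathrm{Parent}(i)$ and destination vertex $\mathrm{Child}(i)$; a station is an edge with $\mathrm{Parent}(i)=\mathrm{Child}(i)$. Stations are single-server first-come-first-served queues and road links are infinite-server queues. For a vertex $v$ put $\mathcal{W}_v=\{j\in\mathcal{N}:\mathrm{Parent}(j)=v\}$. Demands. There are customer classes $\mathcal{Q}$ and rebalancing ("virtual passenger") classes $\mathcal{R}$; the class set is $\mathcal{K}=\mathcal{Q}\cup\mathcal{R}$. Each class $k$ has an origin station $s^{(k)}\in\mathcal{S}$, a destination station $t^{(k)}\in\mathcal{S}$ with $t^{(k)}\ne s^{(k)}$, and an arrival rate $\lambda^{(k)}$; the notation $\lambda^{(k)}_{s^{(k)}}$ also means $\lambda^{(k)}$. Customer rates are positive and given; rebalancing rates are decision variables.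 Let $\mathcal{O}_i=\{k\in\mathcal{K}:s^{(k)}=i\}$ and $\mathcal{D}_i=\{k\in\mathcal{K}:t^{(k)}=i\}$. Let $\widetilde{\lambda}_i=\sum_{k\in\mathcal{O}_i}\lambda^{(k)}$, and for $k'\in\mathcal{O}_i$ let $\widetilde{p}^{(k')}_i=\lambda^{(k')}/\widetilde{\lambda}_i$. Routing. For each class $k$, routing probabilities $\alpha^{(k)}_{i,j}\ge 0$ with $\sum_j\alpha^{(k)}_{i,j}=1$ are given. The routing matrix, giving the probability that an agent of class $k$ leaving queue $i$ moves to queue $j$ as class $k'$, is \[ p_{i,k;j,k'}=\begin{cases}\alpha^{(k)}_{i,j} & \text{if } k=k',\ j\in\mathcal{W}_{\mathrm{Child}(i)},\ t^{(k)}\notin\mathcal{W}_{\mathrm{Child}(i)},\\ \widetilde{p}^{(k')}_j & \text{if } j=t^{(k)},\ t^{(k)}\in\mathcal{W}_{\mathrm{Child}(i)},\ k'\in\mathcal{O}_j,\\ 0 & \text{otherwise.}\end{cases} \] Throughputs. The relative throughputs $\pi_{i,k}$ solve the traffic equations $\pi_{i,k}=\sum_{k'\in\mathcal{K}}\sum_{j\in\mathcal{N}}\pi_{j,k'}p_{j,k';i,k}$. Put $\pi_i=\sum_{k}\pi_{i,k}$. The base service rate $\mu^o_i$ equals $\widetilde{\lambda}_i$ for a station $i$ and $1/T_i$ for a road link $i$, where $T_i>0$ is the mean free-flow travel time. The relative utilization is $\gamma_i=\sum_k\pi_{i,k}/\mu^o_i$. Each road link $i$ has a nominal capacity $C_i$.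 Throughput with $m$ vehicles. For $m$ vehicles, let $\Omega^*_m=\{(x_1,\dots,x_N)\in\mathbb{N}^N:\sum_ix_i=m\}$. Let $c_i(a)=1$ for $i\in\mathcal{S}$ and $c_i(a)=a$ for $i\in\mathcal{I}$. Define \[ G(m)=\sum_{\Omega^*_m}\prod_i\frac{\gamma_i^{x_i}}{\prod_{a=1}^{x_i}c_i(a)} \] and $\Lambda_i(m)=\pi_iG(m-1)/G(m)$. OSCARR problem. With fleet size $m$, choose $\{\lambda^{(r)}\}_{r\in\mathcal{R}}$ and $\{\alpha^{(k)}_{ij}\}$ to minimize $\sum_{i\in\mathcal{I}}\Lambda_i(m)T_i$ subject to: (i) $\gamma_i=\gamma_j$ for all $i,j\in\mathcal{S}$; (ii) $\Lambda_i(m)T_i\le C_i$ for all $i\in\mathcal{I}$; (iii) $\pi_{s^{(k)},k}=\sum_{k'\in\mathcal{K}}\sum_{j\in\mathcal{N}}\pi_{j,k}p_{j,k;t^{(k)},k'}$ for all $k\in\mathcal{K}$; (iv) the traffic equations hold for all $i\in\mathcal{N}$; (v) $\sum_j\alpha^{(k)}_{ij}=1$ and $\alpha^{(k)}_{ij}\ge 0$; (vi) $\lambda^{(r)}\ge0$ for all $r\in\mathcal{R}$. A feasible solution is one satisfying (i)–(vi). *)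

theory Defs
  imports Complex_Main
begin

record ('v, 'q, 'k) amod_net =
  verts     :: "'v set"
  stations  :: "'q set"
  roads     :: "'q set"
  parent    :: "'q \<Rightarrow> 'v"
  child     :: "'q \<Rightarrow> 'v"
  cust      :: "'k set"
  reb       :: "'k set"
  orig      :: "'k \<Rightarrow> 'q"
  dest      :: "'k \<Rightarrow> 'q"
  cust_rate :: "'k \<Rightarrow> real"
  ttime     :: "'q \<Rightarrow> real"
  cap       :: "'q \<Rightarrow> real"

definition queues :: "('v, 'q, 'k, 'z) amod_net_scheme \<Rightarrow> 'q set" where
  "queues Z = stations Z \<union> roads Z"

definition classes :: "('v, 'q, 'k, 'z) amod_net_scheme \<Rightarrow> 'k set" where
  "classes Z = cust Z \<union> reb Z"

definition wf_amod :: "('v, 'q, 'k, 'z) amod_net_scheme \<Rightarrow> bool" where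
  "wf_amod Z \<longleftrightarrow>
     finite (verts Z) \<and> finite (stations Z) \<and> finite (roads Z) \<and>
     stations Z \<inter> roads Z = {} \<and>
     (\<forall>i\<in>queues Z. parent Z i \<in> verts Z \<and> child Z i \<in> verts Z) \<and>
     (\<forall>i\<in>stations Z. parent Z i = child Z i) \<and>
     finite (cust Z) \<and> finite (reb Z) \<and> cust Z \<inter> reb Z = {} \<and>
     (\<forall>k\<in>classes Z. orig Z k \<in> stations Z \<and> dest Z k \<in> stations Z \<and> dest Z k \<noteq> orig Z k) \<and>
     (\<forall>k\<in>cust Z. cust_rate Z k > 0) \<and>
     (\<forall>i\<in>roads Z. ttime Z i > 0)"

definition rate :: "('v, 'q, 'k, 'z) amod_net_scheme \<Rightarrow> ('k \<Rightarrow> real) \<Rightarrow> 'k \<Rightarrow> real" where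
  "rate Z lamR k = (if k \<in> cust Z then cust_rate Z k else lamR k)"

definition Wset :: "('v, 'q, 'k, 'z) amod_net_scheme \<Rightarrow> 'v \<Rightarrow> 'q set" where
  "Wset Z v = {j \<in> queues Z. parent Z j = v}"

definition Ocl :: "('v, 'q, 'k, 'z) amod_net_scheme \<Rightarrow> 'q \<Rightarrow> 'k set" where
  "Ocl Z i = {k \<in> classes Z. orig Z k = i}"

definition Dcl :: "('v, 'q, 'k, 'z) amod_net_scheme \<Rightarrow> 'q \<Rightarrow> 'k set" where
  "Dcl Z i = {k \<in> classes Z. dest Z k = i}"

definition lam_tilde :: "('v, 'q, 'k, 'z) amod_net_scheme \<Rightarrow> ('k \<Rightarrow> real) \<Rightarrow> 'q \<Rightarrow> real" where
  "lam_tilde Z lamR i = (\<Sum>k\<in>Ocl Z i. rate Z lamR k)"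

definition p_tilde :: "('v, 'q, 'k, 'z) amod_net_scheme \<Rightarrow> ('k \<Rightarrow> real) \<Rightarrow> 'k \<Rightarrow> 'q \<Rightarrow> real" where
  "p_tilde Z lamR k' i = rate Z lamR k' / lam_tilde Z lamR i"

text \<open>Routing matrix p_{i,k;j,k'}; alpha k i j is alpha^(k)_{i,j}.\<close>
definition route :: "('v, 'q, 'k, 'z) amod_net_scheme \<Rightarrow> ('k \<Rightarrow> real) \<Rightarrow> ('k \<Rightarrow> 'q \<Rightarrow> 'q \<Rightarrow> real)
    \<Rightarrow> 'q \<Rightarrow> 'k \<Rightarrow> 'q \<Rightarrow> 'k \<Rightarrow> real" where
  "route Z lamR alpha i k j k' =
     (if k = k' \<and> j \<in> Wset Z (child Z i) \<and> dest Z k \<notin> Wset Z (child Z i) then alpha k i j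
      else if j = dest Z k \<and> dest Z k \<in> Wset Z (child Z i) \<and> k' \<in> Ocl Z j then p_tilde Z lamR k' j
      else 0)"

definition traffic_eqs :: "('v, 'q, 'k, 'z) amod_net_scheme \<Rightarrow> ('k \<Rightarrow> real) \<Rightarrow> ('k \<Rightarrow> 'q \<Rightarrow> 'q \<Rightarrow> real)
    \<Rightarrow> ('q \<Rightarrow> 'k \<Rightarrow> real) \<Rightarrow> bool" where
  "traffic_eqs Z lamR alpha thr \<longleftrightarrow>
     (\<forall>i\<in>queues Z. \<forall>k\<in>classes Z.
        thr i k = (\<Sum>k'\<in>classes Z. \<Sum>j\<in>queues Z. thr j k' * route Z lamR alpha j k' i k))"

definition pi_tot :: "('v, 'q, 'k, 'z) amod_net_scheme \<Rightarrow> ('q \<Rightarrow> 'k \<Rightarrow> real) \<Rightarrow> 'q \<Rightarrow> real" where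
  "pi_tot Z thr i = (\<Sum>k\<in>classes Z. thr i k)"

definition mu0 :: "('v, 'q, 'k, 'z) amod_net_scheme \<Rightarrow> ('k \<Rightarrow> real) \<Rightarrow> 'q \<Rightarrow> real" where
  "mu0 Z lamR i = (if i \<in> stations Z then lam_tilde Z lamR i else 1 / ttime Z i)"

definition gamma :: "('v, 'q, 'k, 'z) amod_net_scheme \<Rightarrow> ('k \<Rightarrow> real) \<Rightarrow> ('q \<Rightarrow> 'k \<Rightarrow> real) \<Rightarrow> 'q \<Rightarrow> real" where
  "gamma Z lamR thr i = pi_tot Z thr i / mu0 Z lamR i"

definition Omega_star :: "('v, 'q, 'k, 'z) amod_net_scheme \<Rightarrow> nat \<Rightarrow> ('q \<Rightarrow> nat) set" where
  "Omega_star Z m = {x. (\<forall>i. i \<notin> queues Z \<longrightarrow> x i = 0) \<and> (\<Sum>i\<in>queues Z. x i) = m}"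

definition cfac :: "('v, 'q, 'k, 'z) amod_net_scheme \<Rightarrow> 'q \<Rightarrow> nat \<Rightarrow> real" where
  "cfac Z i a = (if i \<in> stations Z then 1 else real a)"

definition Gnorm :: "('v, 'q, 'k, 'z) amod_net_scheme \<Rightarrow> ('k \<Rightarrow> real) \<Rightarrow> ('q \<Rightarrow> 'k \<Rightarrow> real) \<Rightarrow> nat \<Rightarrow> real" where
  "Gnorm Z lamR thr m =
     (\<Sum>x\<in>Omega_star Z m. \<Prod>i\<in>queues Z.
         gamma Z lamR thr i ^ x i / (\<Prod>a\<in>{1..x i}. cfac Z i a))"

definition Lam :: "('v, 'q, 'k, 'z) amod_net_scheme \<Rightarrow> ('k \<Rightarrow> real) \<Rightarrow> ('q \<Rightarrow> 'k \<Rightarrow> real) \<Rightarrow> nat \<Rightarrow> 'q \<Rightarrow> real" where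
  "Lam Z lamR thr m i = pi_tot Z thr i * Gnorm Z lamR thr (m - 1) / Gnorm Z lamR thr m"

text \<open>Feasibility for OSCARR: constraints (i)-(vi); thr are the relative throughputs.\<close>
definition feasible :: "('v, 'q, 'k, 'z) amod_net_scheme \<Rightarrow> nat \<Rightarrow> ('k \<Rightarrow> real)
    \<Rightarrow> ('k \<Rightarrow> 'q \<Rightarrow> 'q \<Rightarrow> real) \<Rightarrow> ('q \<Rightarrow> 'k \<Rightarrow> real) \<Rightarrow> bool" where
  "feasible Z m lamR alpha thr \<longleftrightarrow>
     (\<forall>i\<in>stations Z. \<forall>j\<in>stations Z. gamma Z lamR thr i = gamma Z lamR thr j) \<and>
     (\<forall>i\<in>roads Z. Lam Z lamR thr m i * ttime Z i \<le> cap Z i) \<and>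
     (\<forall>k\<in>classes Z. thr (orig Z k) k =
        (\<Sum>k'\<in>classes Z. \<Sum>j\<in>queues Z. thr j k * route Z lamR alpha j k (dest Z k) k')) \<and>
     traffic_eqs Z lamR alpha thr \<and>
     (\<forall>k\<in>classes Z. \<forall>i\<in>queues Z.
        (\<Sum>j\<in>queues Z. alpha k i j) = 1 \<and> (\<forall>j\<in>queues Z. alpha k i j \<ge> 0)) \<and>
     (\<forall>r\<in>reb Z. lamR r \<ge> 0)"

end

theory Submission
  imports Defs
begin

text \<open>Agents enter a station only on reaching the destination of their class, where they
  are relabelled with an origin class k' of that station with probability p_tilde k' i.
  So the traffic equations make the class-k' throughput at station i equal to
  p_tilde k' i times the arrival flow at i, the sum of the terminal flows of the classes
  with destination i; summing over k', pi_i is that arrival flow. Constraint (iii) says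
  that the terminal flow of class k equals its throughput at its origin, which is
  p_tilde k (orig k) * pi (orig k) by the first fact. If some station has no
  outgoing demand, equal utilizations force every station throughput to vanish.\<close>

definition terminal_flow :: "('v, 'q, 'k, 'z) amod_net_scheme \<Rightarrow> ('q \<Rightarrow> 'k \<Rightarrow> real) \<Rightarrow> 'k \<Rightarrow> real" where
  "terminal_flow Z thr k = (\<Sum>j | j \<in> queues Z \<and> child Z j = parent Z (dest Z k). thr j k)"

definition arrival_flow :: "('v, 'q, 'k, 'z) amod_net_scheme \<Rightarrow> ('q \<Rightarrow> 'k \<Rightarrow> real) \<Rightarrow> 'q \<Rightarrow> real" where
  "arrival_flow Z thr i = (\<Sum>k\<in>Dcl Z i. terminal_flow Z thr k)"

lemma wf_amod_finite:
  assumes "wf_amod Z"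
  shows "finite (queues Z)" and "finite (classes Z)"
  using assms unfolding wf_amod_def queues_def classes_def by auto

lemma wf_amod_orig_dest:
  assumes "wf_amod Z" and "k \<in> classes Z"
  shows "orig Z k \<in> stations Z" and "dest Z k \<in> stations Z"
  using assms unfolding wf_amod_def by auto

lemma route_into_station:
  assumes "\<forall>k\<in>classes Z. \<forall>i\<in>queues Z. \<forall>j\<in>stations Z. alpha k i j = 0"
    and "i \<in> stations Z" and "j \<in> queues Z" and "k' \<in> classes Z"
  shows "route Z lamR alpha j k' i k =
     (if dest Z k' = i \<and> child Z j = parent Z i \<and> k \<in> Ocl Z i then p_tilde Z lamR k i else 0)"
  using assms unfolding route_def Wset_def queues_def by auto

lemma route_to_dest:
  assumes "dest Z k \<in> queues Z"
  shows "route Z lamR alpha j k (dest Z k) k' =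
     (if child Z j = parent Z (dest Z k) \<and> k' \<in> Ocl Z (dest Z k) then p_tilde Z lamR k' (dest Z k) else 0)"
  using assms unfolding route_def Wset_def by auto

lemma sum_p_tilde_origin:
  "(\<Sum>k\<in>Ocl Z i. p_tilde Z lamR k i) = (if lam_tilde Z lamR i = 0 then 0 else 1)"
  unfolding p_tilde_def lam_tilde_def by (simp add: sum_divide_distrib[symmetric])

lemma arrival_flow_eq_sum:
  assumes "finite (queues Z)" and "finite (classes Z)"
  shows "arrival_flow Z thr i = (\<Sum>k'\<in>classes Z. \<Sum>j\<in>queues Z.
            if dest Z k' = i \<and> child Z j = parent Z i then thr j k' else 0)"
proof -
  have "arrival_flow Z thr i = (\<Sum>k'\<in>classes Z. if dest Z k' = i then terminal_flow Z thr k' else 0)"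
    using assms(2) unfolding arrival_flow_def Dcl_def by (simp add: sum.inter_filter)
  also have "\<dots> = (\<Sum>k'\<in>classes Z. \<Sum>j\<in>queues Z.
            if dest Z k' = i \<and> child Z j = parent Z i then thr j k' else 0)"
    using assms(1) unfolding terminal_flow_def by (intro sum.cong refl) (auto simp: sum.inter_filter)
  finally show ?thesis .
qed

lemma thr_station:
  assumes fin: "finite (queues Z)" "finite (classes Z)"
    and az: "\<forall>k\<in>classes Z. \<forall>i\<in>queues Z. \<forall>j\<in>stations Z. alpha k i j = 0"
    and tr: "traffic_eqs Z lamR alpha thr"
    and i: "i \<in> stations Z" and k: "k \<in> classes Z"
  shows "thr i k = (if k \<in> Ocl Z i then p_tilde Z lamR k i * arrival_flow Z thr i else 0)"
proof -
  have "thr i k = (\<Sum>k'\<in>classes Z. \<Sum>j\<in>queues Z. thr j k' * route Z lamR alpha j k' i k)"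
    using tr i k unfolding traffic_eqs_def queues_def by auto
  also have "\<dots> = (\<Sum>k'\<in>classes Z. \<Sum>j\<in>queues Z. if k \<in> Ocl Z i then p_tilde Z lamR k i *
      (if dest Z k' = i \<and> child Z j = parent Z i then thr j k' else 0) else 0)"
    by (intro sum.cong refl) (simp add: route_into_station[OF az i])
  also have "\<dots> = (if k \<in> Ocl Z i then p_tilde Z lamR k i * arrival_flow Z thr i else 0)"
    by (simp add: arrival_flow_eq_sum[OF fin] sum_distrib_left)
  finally show ?thesis .
qed

lemma pi_tot_station:
  assumes "finite (queues Z)" "finite (classes Z)"
    and "\<forall>k\<in>classes Z. \<forall>i\<in>queues Z. \<forall>j\<in>stations Z. alpha k i j = 0"
    and "traffic_eqs Z lamR alpha thr"
    and "i \<in> stations Z"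
  shows "pi_tot Z thr i = (\<Sum>k\<in>Ocl Z i. p_tilde Z lamR k i) * arrival_flow Z thr i"
proof -
  have "pi_tot Z thr i = (\<Sum>k\<in>classes Z. if k \<in> Ocl Z i then p_tilde Z lamR k i * arrival_flow Z thr i else 0)"
    unfolding pi_tot_def using thr_station[OF assms] by (intro sum.cong) auto
  also have "\<dots> = (\<Sum>k\<in>Ocl Z i. p_tilde Z lamR k i * arrival_flow Z thr i)"
    using assms(2) unfolding Ocl_def by (simp add: sum.inter_filter)
  finally show ?thesis by (simp add: sum_distrib_right)
qed

lemma thr_orig:
  assumes fin: "finite (queues Z)" "finite (classes Z)" and dq: "dest Z k \<in> queues Z"
    and iii: "thr (orig Z k) k =
        (\<Sum>k'\<in>classes Z. \<Sum>j\<in>queues Z. thr j k * route Z lamR alpha j k (dest Z k) k')"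
  shows "thr (orig Z k) k = (\<Sum>k'\<in>Ocl Z (dest Z k). p_tilde Z lamR k' (dest Z k)) * terminal_flow Z thr k"
proof -
  have "thr (orig Z k) k = (\<Sum>j\<in>queues Z. \<Sum>k'\<in>classes Z. thr j k * route Z lamR alpha j k (dest Z k) k')"
    using iii by (simp add: sum.swap[of _ "classes Z"])
  also have "\<dots> = (\<Sum>j\<in>queues Z. (if child Z j = parent Z (dest Z k) then thr j k else 0) *
      (\<Sum>k'\<in>classes Z. if k' \<in> Ocl Z (dest Z k) then p_tilde Z lamR k' (dest Z k) else 0))"
    by (intro sum.cong refl) (simp add: route_to_dest[OF dq] sum_distrib_left)
  also have "(\<Sum>k'\<in>classes Z. if k' \<in> Ocl Z (dest Z k) then p_tilde Z lamR k' (dest Z k) else 0)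
      = (\<Sum>k'\<in>Ocl Z (dest Z k). p_tilde Z lamR k' (dest Z k))"
    using fin(2) unfolding Ocl_def by (simp add: sum.inter_filter)
  also have "(\<Sum>j\<in>queues Z. (if child Z j = parent Z (dest Z k) then thr j k else 0) *
      (\<Sum>k'\<in>Ocl Z (dest Z k). p_tilde Z lamR k' (dest Z k)))
      = (\<Sum>k'\<in>Ocl Z (dest Z k). p_tilde Z lamR k' (dest Z k)) * terminal_flow Z thr k"
    unfolding terminal_flow_def sum.inter_filter[OF fin(1)] sum_distrib_right[symmetric]
    by (rule mult.commute)
  finally show ?thesis .
qed

text \<open>Here gamma s = 0 only because division by zero yields 0 in HOL: the station s has
  base service rate lam_tilde s = 0.\<close>
lemma station_throughput_vanishes:
  assumes fin: "finite (queues Z)" "finite (classes Z)"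
    and az: "\<forall>k\<in>classes Z. \<forall>i\<in>queues Z. \<forall>j\<in>stations Z. alpha k i j = 0"
    and tr: "traffic_eqs Z lamR alpha thr"
    and gam: "\<forall>i\<in>stations Z. \<forall>j\<in>stations Z. gamma Z lamR thr i = gamma Z lamR thr j"
    and s: "s \<in> stations Z" "lam_tilde Z lamR s = 0"
    and t: "t \<in> stations Z"
  shows "pi_tot Z thr t = 0"
proof (cases "lam_tilde Z lamR t = 0")
  case True
  then show ?thesis by (simp add: pi_tot_station[OF fin az tr t] sum_p_tilde_origin)
next
  case False
  have "gamma Z lamR thr t = gamma Z lamR thr s" using gam s(1) t by blast
  also have "\<dots> = 0" using s by (simp add: gamma_def mu0_def)
  finally show ?thesis using False t by (simp add: gamma_def mu0_def)
qed

lemma origin_throughput_eq_terminal_flow: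
  assumes wf: "wf_amod Z"
    and az: "\<forall>k\<in>classes Z. \<forall>i\<in>queues Z. \<forall>j\<in>stations Z. alpha k i j = 0"
    and tr: "traffic_eqs Z lamR alpha thr"
    and iii: "thr (orig Z k) k =
        (\<Sum>k'\<in>classes Z. \<Sum>j\<in>queues Z. thr j k * route Z lamR alpha j k (dest Z k) k')"
    and pos: "lam_tilde Z lamR (orig Z k) \<noteq> 0" "lam_tilde Z lamR (dest Z k) \<noteq> 0"
    and k: "k \<in> classes Z"
  shows "p_tilde Z lamR k (orig Z k) * pi_tot Z thr (orig Z k) = terminal_flow Z thr k"
proof -
  note fin = wf_amod_finite[OF wf]
  have o: "orig Z k \<in> stations Z" and d: "dest Z k \<in> stations Z"
    using wf_amod_orig_dest[OF wf k] .
  have "p_tilde Z lamR k (orig Z k) * pi_tot Z thr (orig Z k)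
      = p_tilde Z lamR k (orig Z k) * arrival_flow Z thr (orig Z k)"
    using pos(1) by (simp add: pi_tot_station[OF fin az tr o] sum_p_tilde_origin)
  also have "\<dots> = thr (orig Z k) k"
    using k by (simp add: thr_station[OF fin az tr o k] Ocl_def)
  also have "\<dots> = terminal_flow Z thr k"
  proof -
    have "dest Z k \<in> queues Z" using d by (simp add: queues_def)
    from thr_orig[where thr = thr, OF fin this iii] show ?thesis
      using pos(2) by (simp add: sum_p_tilde_origin)
  qed
  finally show ?thesis .
qed

theorem lemma1:
  fixes Z :: "('v, 'q, 'k) amod_net"
    and m :: nat
    and lamR :: "'k \<Rightarrow> real"
    and alpha :: "'k \<Rightarrow> 'q \<Rightarrow> 'q \<Rightarrow> real"
    and thr :: "'q \<Rightarrow> 'k \<Rightarrow> real"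
  assumes "wf_amod Z"
    and "\<forall>k\<in>classes Z. \<forall>i\<in>queues Z. \<forall>j\<in>stations Z. alpha k i j = 0"
    and "feasible Z m lamR alpha thr"
  shows "\<forall>i\<in>stations Z.
           pi_tot Z thr i = (\<Sum>k\<in>Dcl Z i. p_tilde Z lamR k (orig Z k) * pi_tot Z thr (orig Z k))"
proof
  fix i assume i: "i \<in> stations Z"
  note wf = assms(1) and az = assms(2) and fin = wf_amod_finite[OF assms(1)]
  have gam: "\<forall>i\<in>stations Z. \<forall>j\<in>stations Z. gamma Z lamR thr i = gamma Z lamR thr j"
    and iii: "\<forall>k\<in>classes Z. thr (orig Z k) k =
        (\<Sum>k'\<in>classes Z. \<Sum>j\<in>queues Z. thr j k * route Z lamR alpha j k (dest Z k) k')"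
    and tr: "traffic_eqs Z lamR alpha thr"
    using assms(3) unfolding feasible_def by blast+
  show "pi_tot Z thr i = (\<Sum>k\<in>Dcl Z i. p_tilde Z lamR k (orig Z k) * pi_tot Z thr (orig Z k))"
  proof (cases "\<exists>s\<in>stations Z. lam_tilde Z lamR s = 0")
    case True
    then obtain s where s: "s \<in> stations Z" "lam_tilde Z lamR s = 0" by blast
    note vanish = station_throughput_vanishes[OF fin az tr gam s]
    have "orig Z k \<in> stations Z" if "k \<in> Dcl Z i" for k
      using that wf_amod_orig_dest[OF wf] unfolding Dcl_def by blast
    then show ?thesis using vanish[OF i] vanish by simp
  next
    case False
    then have pos: "\<forall>t\<in>stations Z. lam_tilde Z lamR t \<noteq> 0" by blast
    have "pi_tot Z thr i = arrival_flow Z thr i"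
      using pos i by (simp add: pi_tot_station[OF fin az tr i] sum_p_tilde_origin)
    also have "\<dots> = (\<Sum>k\<in>Dcl Z i. p_tilde Z lamR k (orig Z k) * pi_tot Z thr (orig Z k))"
      unfolding arrival_flow_def using origin_throughput_eq_terminal_flow[OF wf az tr] iii pos
        wf_amod_orig_dest[OF wf]
      by (intro sum.cong refl) (simp add: Dcl_def)
    finally show ?thesis .
  qed
qed

end
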